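(* For $n\ge 3$, $a(n,1)=a(n-1,1)+n-1$.
   Context: For $n\ge 2$, $A_n$ is the alternating group on $\{1,\dots,n\}$, $T(A_n)=\{(1\,2)(i\,j)\mid 1\le i<j\le n\}$ (a generating set of $A_n$; note $(1\,2)(1\,2)=e$), and for $v\in A_n$, $\ell_{T(A_n)}(v)=\min\{k\ge 0\mid v=t_1\cdots t_k,\ t_i\in T(A_n)\}$. $a(n,m)$ denotes the number of $v\in A_n$ with $\ell_{T(A_n)}(v)=m$. *)

theory Defs
  imports "HOL-Combinatorics.Combinatorics"
begin

definition altgrp :: "nat \<Rightarrow> (nat \<Rightarrow> nat) set" where
  "altgrp n = {p. p permutes {1..n} \<and> evenperm p}"

definition gensT :: "nat \<Rightarrow> (nat \<Rightarrow> nat) set" where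
  "gensT n = {transpose 1 2 \<circ> transpose i j | i j. 1 \<le> i \<and> i < j \<and> j \<le> n}"

definition lenT :: "nat \<Rightarrow> (nat \<Rightarrow> nat) \<Rightarrow> nat" where
  "lenT n v = (LEAST k. \<exists>ts. length ts = k \<and> set ts \<subseteq> gensT n \<and> foldr (\<circ>) ts id = v)"

definition a_count :: "nat \<Rightarrow> nat \<Rightarrow> nat" where
  "a_count n m = card {v \<in> altgrp n. lenT n v = m}"

end

theory Submission
  imports Defs
begin

text \<open>
  An element of \<open>A\<^sub>n\<close> has length 1 exactly when it is a non-identity generator, so \<open>a(n,1)\<close> is
  the number of generators \<open>(1 2)(i j) \<noteq> e\<close>; this needs that the generators really generate
  \<open>A\<^sub>n\<close>, since otherwise the length is a junk value. Passing from \<open>n - 1\<close> to \<open>n\<close> adds exactly the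
  \<open>n - 1\<close> generators \<open>(1 2)(i n)\<close>, which are the ones moving \<open>n\<close>, and they are pairwise distinct
  because \<open>(1 2)(i n)\<close> sends \<open>n\<close> to \<open>(1 2) i\<close>.
\<close>

abbreviation t12 :: "nat \<Rightarrow> nat" where
  "t12 \<equiv> transpose 1 2"

abbreviation word_prod :: "('a \<Rightarrow> 'a) list \<Rightarrow> 'a \<Rightarrow> 'a" where
  "word_prod ts \<equiv> foldr (\<circ>) ts id"

lemma word_prod_Cons: "word_prod (t # ts) = t \<circ> word_prod ts"
  by (simp only: foldr.simps o_apply)

lemma t12_comp_transpose_in_gensT:
  assumes "a \<in> {1..n}" "b \<in> {1..n}" "a \<noteq> b"
  shows "t12 \<circ> transpose a b \<in> gensT n"
proof (cases "a < b")
  case True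
  then show ?thesis using assms unfolding gensT_def by force
next
  case False
  then have "b < a" using assms(3) by simp
  then show ?thesis using assms transpose_commute[of a b] unfolding gensT_def by force
qed

lemma gensT_subset_altgrp:
  assumes "n \<ge> 2"
  shows "gensT n \<subseteq> altgrp n"
proof
  fix t assume "t \<in> gensT n"
  then obtain i j where t: "t = t12 \<circ> transpose i j" "1 \<le> i" "i < j" "j \<le> n"
    unfolding gensT_def by blast
  have "t permutes {1..n}"
    unfolding t(1) using assms t by (intro permutes_compose permutes_swap_id) auto
  moreover have "evenperm t"
    unfolding t(1) using t by (simp add: evenperm_comp permutation_swap_id evenperm_swap)
  ultimately show "t \<in> altgrp n" unfolding altgrp_def by simp
qed

lemma altgrp_comp_closed:
  assumes "p \<in> altgrp n" "q \<in> altgrp n"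
  shows "p \<circ> q \<in> altgrp n"
proof -
  have "permutation p" "permutation q"
    using assms unfolding altgrp_def by (auto simp: permutation_permutes)
  then show ?thesis using assms unfolding altgrp_def
    by (auto intro: permutes_compose simp: evenperm_comp)
qed

lemma word_prod_in_altgrp:
  assumes "n \<ge> 2" "set ts \<subseteq> gensT n"
  shows "word_prod ts \<in> altgrp n"
  using assms(2)
proof (induction ts)
  case Nil
  then show ?case unfolding altgrp_def using permutes_id[of "{1..n}"] by (simp add: id_def)
next
  case (Cons t ts)
  have "t \<in> altgrp n" using Cons.prems gensT_subset_altgrp[OF assms(1)] by auto
  moreover have "word_prod ts \<in> altgrp n" by (rule Cons.IH) (use Cons.prems in simp)
  ultimately show ?case unfolding word_prod_Cons by (rule altgrp_comp_closed)
qed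

text \<open>
  Left multiplication by a transposition \<open>(a b)\<close> keeps the shape \<open>w\<close> or \<open>(1 2) w\<close> of a
  word \<open>w\<close> in the generators: \<open>(a b) w = (1 2)((1 2)(a b)) w\<close> and
  \<open>(a b)(1 2) w = ((1 2)(c d)) w\<close> with \<open>(c d)\<close> the conjugate of \<open>(a b)\<close> by \<open>(1 2)\<close>.
\<close>

lemma permutes_word_prod_or_t12:
  assumes "n \<ge> 2" "p permutes {1..n}"
  shows "\<exists>ts. set ts \<subseteq> gensT n \<and> (word_prod ts = p \<or> t12 \<circ> word_prod ts = p)"
  using assms(2) finite_atLeastAtMost[of 1 n]
proof (induction rule: permutes_induct)
  case id
  show ?case by (rule exI[of _ "[]"]) simp
next
  case (swap a b p)
  then obtain ts where ts: "set ts \<subseteq> gensT n" "word_prod ts = p \<or> t12 \<circ> word_prod ts = p"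
    by blast
  show ?case
  proof (cases "word_prod ts = p")
    case True
    have "t12 \<circ> word_prod ((t12 \<circ> transpose a b) # ts) = transpose a b \<circ> p"
      unfolding word_prod_Cons True by (simp add: fun_eq_iff)
    moreover have "set ((t12 \<circ> transpose a b) # ts) \<subseteq> gensT n"
      using t12_comp_transpose_in_gensT[of a n b] swap ts(1) by simp
    ultimately show ?thesis by blast
  next
    case False
    then have p: "p = t12 \<circ> word_prod ts" using ts by simp
    have conj: "transpose a b \<circ> t12 = t12 \<circ> transpose (t12 a) (t12 b)"
      by (auto simp: fun_eq_iff transpose_def)
    have "word_prod ((t12 \<circ> transpose (t12 a) (t12 b)) # ts) = transpose a b \<circ> p"
      unfolding word_prod_Cons p by (simp only: conj flip: comp_assoc)
    moreover have "t12 a \<in> {1..n}" "t12 b \<in> {1..n}" "t12 a \<noteq> t12 b"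
      using swap assms(1) by (auto simp: transpose_def)
    then have "set ((t12 \<circ> transpose (t12 a) (t12 b)) # ts) \<subseteq> gensT n"
      using t12_comp_transpose_in_gensT ts(1) by simp
    ultimately show ?thesis by blast
  qed
qed

lemma altgrp_word_prod_gensT:
  assumes "n \<ge> 2" "v \<in> altgrp n"
  shows "\<exists>ts. set ts \<subseteq> gensT n \<and> word_prod ts = v"
proof -
  have v: "v permutes {1..n}" "evenperm v" using assms(2) unfolding altgrp_def by auto
  obtain ts where ts: "set ts \<subseteq> gensT n" "word_prod ts = v \<or> t12 \<circ> word_prod ts = v"
    using permutes_word_prod_or_t12[OF assms(1) v(1)] by blast
  have w: "word_prod ts \<in> altgrp n" using word_prod_in_altgrp[OF assms(1) ts(1)] .
  then have "permutation (word_prod ts)" unfolding altgrp_def by (auto simp: permutation_permutes)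
  then have "\<not> evenperm (t12 \<circ> word_prod ts)"
    using w unfolding altgrp_def by (simp add: evenperm_comp permutation_swap_id evenperm_swap)
  then show ?thesis using ts v(2) by blast
qed

lemma lenT_eq_1_iff:
  assumes "n \<ge> 2" "v \<in> altgrp n"
  shows "lenT n v = 1 \<longleftrightarrow> v \<in> gensT n \<and> v \<noteq> id"
proof -
  let ?P = "\<lambda>k. \<exists>ts. length ts = k \<and> set ts \<subseteq> gensT n \<and> word_prod ts = v"
  have P0: "?P 0 \<longleftrightarrow> v = id" by auto
  have P1: "?P 1 \<longleftrightarrow> v \<in> gensT n"
    by (auto simp: length_Suc_conv intro!: exI[of _ "[v]"])
  obtain k where "?P k" using altgrp_word_prod_gensT[OF assms] by blast
  then have "?P (lenT n v)" unfolding lenT_def by (rule LeastI)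
  moreover have "lenT n v = 0" if "?P 0" using that unfolding lenT_def by (rule Least_eq_0)
  moreover have "lenT n v \<le> 1" if "?P 1" using that unfolding lenT_def by (rule Least_le)
  ultimately show ?thesis using P0 P1 by (cases "lenT n v") auto
qed

lemma a_count_1_eq_card_gensT:
  assumes "n \<ge> 2"
  shows "a_count n 1 = card (gensT n - {id})"
proof -
  have "{v \<in> altgrp n. lenT n v = 1} = gensT n - {id}"
    using lenT_eq_1_iff[OF assms] gensT_subset_altgrp[OF assms] by blast
  then show ?thesis unfolding a_count_def by simp
qed

lemma finite_gensT: "finite (gensT n)"
proof -
  have "gensT n \<subseteq> (\<lambda>(i, j). t12 \<circ> transpose i j) ` ({1..n} \<times> {1..n})"
    unfolding gensT_def by force
  then show ?thesis by (rule finite_subset) auto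
qed

lemma gensT_fixes_above:
  assumes "t \<in> gensT n" "n \<ge> 2" "k > n"
  shows "t k = k"
  using assms unfolding gensT_def by (auto simp: transpose_def)

lemma t12_comp_transpose_moves_last:
  assumes "m \<ge> 2" "i \<le> m"
  shows "(t12 \<circ> transpose i (Suc m)) (Suc m) = t12 i" "t12 i \<noteq> Suc m"
  using assms by (auto simp: transpose_def)

lemma gensT_Suc_diff_id:
  assumes "m \<ge> 2"
  shows "gensT (Suc m) - {id} = (gensT m - {id}) \<union> (\<lambda>i. t12 \<circ> transpose i (Suc m)) ` {1..m}"
    (is "_ = _ \<union> ?f ` {1..m}")
proof
  show "gensT (Suc m) - {id} \<subseteq> (gensT m - {id}) \<union> ?f ` {1..m}"
  proof
    fix t assume "t \<in> gensT (Suc m) - {id}"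
    then obtain i j where t: "t = t12 \<circ> transpose i j" "1 \<le> i" "i < j" "j \<le> Suc m" "t \<noteq> id"
      unfolding gensT_def by blast
    show "t \<in> (gensT m - {id}) \<union> ?f ` {1..m}"
    proof (cases "j = Suc m")
      case True
      then show ?thesis using t by auto
    next
      case False
      then have "t \<in> gensT m" using t unfolding gensT_def by force
      then show ?thesis using t(5) by blast
    qed
  qed
next
  have "?f i \<in> gensT (Suc m) - {id}" if "i \<in> {1..m}" for i
  proof -
    have "?f i (Suc m) \<noteq> Suc m" using t12_comp_transpose_moves_last[OF assms] that by simp
    then have "?f i \<noteq> id" by (metis id_apply)
    moreover have "?f i \<in> gensT (Suc m)" using that unfolding gensT_def by force
    ultimately show ?thesis by blast
  qed
  moreover have "gensT m \<subseteq> gensT (Suc m)" unfolding gensT_def by fastforce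
  ultimately show "(gensT m - {id}) \<union> ?f ` {1..m} \<subseteq> gensT (Suc m) - {id}"
    unfolding Un_subset_iff image_subset_iff by blast
qed

lemma card_gensT_Suc_diff_id:
  assumes "m \<ge> 2"
  shows "card (gensT (Suc m) - {id}) = card (gensT m - {id}) + m"
proof -
  let ?f = "\<lambda>i. t12 \<circ> transpose i (Suc m)"
  note moves = t12_comp_transpose_moves_last[OF assms]
  have "inj_on ?f {1..m}"
  proof
    fix i k assume "i \<in> {1..m}" "k \<in> {1..m}" "?f i = ?f k"
    then have "t12 i = t12 k" using moves(1) by (metis atLeastAtMost_iff)
    then show "i = k" by (metis transpose_involutory)
  qed
  then have "card (?f ` {1..m}) = m" by (simp add: card_image)
  moreover have "?f i \<notin> gensT m" if "i \<in> {1..m}" for i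
    using gensT_fixes_above[OF _ assms, of _ "Suc m"] moves that by force
  then have "(gensT m - {id}) \<inter> ?f ` {1..m} = {}" by blast
  ultimately show ?thesis unfolding gensT_Suc_diff_id[OF assms]
    by (subst card_Un_disjoint) (auto intro: finite_gensT)
qed

theorem proposition5p2:
  fixes n :: nat
  assumes "n \<ge> 3"
  shows "a_count n 1 = a_count (n - 1) 1 + (n - 1)"
proof -
  obtain m where n: "n = Suc m" and m: "m \<ge> 2" using assms by (cases n) auto
  have "a_count n 1 = card (gensT m - {id}) + m"
    using a_count_1_eq_card_gensT card_gensT_Suc_diff_id m n by simp
  also have "\<dots> = a_count (n - 1) 1 + (n - 1)"
    using a_count_1_eq_card_gensT m n by simp
  finally show ?thesis .
qed

end
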